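(* Let $\beta\in\mathbb{C}$ with $|\beta|=1$ and $\beta^n\neq1$ for all $n\in\mathbb{N}$. Let $m\in\mathrm{Hol}(\mathbb{D})$ with $m(z)\neq0$ for all $z\in\mathbb{D}$, write $m=\exp(m_1)$ with $m_1\in\mathrm{Hol}(\mathbb{D})$, $m_1(z)=\sum_{n\geq0}a_nz^n$, and let $T:\mathrm{Hol}(\mathbb{D})\to\mathrm{Hol}(\mathbb{D})$ be given by $(Tf)(z)=m(z)f(\beta z)$. (a) If $\limsup_{n\to\infty}\left(\frac{|a_n|}{|1-\beta^n|}\right)^{1/n}\leq1$, then $\sigma_p(T)=\{m(0)\beta^n:n\in\mathbb{N}_0\}$, and for each $n\in\mathbb{N}_0$, $\ker(T-m(0)\beta^n\mathrm{Id})$ is one-dimensional, generated by $f_n(z)=z^n\exp(g_1(z))$ where $g_1(z)=\sum_{k\geq1}\frac{a_k}{1-\beta^k}z^k$, $z\in\mathbb{D}$. (b) If $\limsup_{n\to\infty}\left(\frac{|a_n|}{|1-\beta^n|}\right)^{1/n}>1$, then $\sigma_p(T)=\emptyset$.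
   Context: $\mathbb{D}$ is the open unit disc, $\mathrm{Hol}(\mathbb{D})$ the Fréchet space of holomorphic functions on $\mathbb{D}$, $\mathbb{N}_0=\mathbb{N}\cup\{0\}$. $\sigma_p(T)$ is the set of $\lambda\in\mathbb{C}$ such that $\lambda\mathrm{Id}-T$ is not injective. *)

theory Defs
  imports "HOL-Complex_Analysis.Complex_Analysis" "HOL-Library.Liminf_Limsup"
begin

text \<open>Elements of Hol(D) are represented by functions holomorphic on the unit disc;
  two such functions are identified when they agree on the disc.\<close>

definition wco_op :: "(complex \<Rightarrow> complex) \<Rightarrow> complex \<Rightarrow> (complex \<Rightarrow> complex) \<Rightarrow> (complex \<Rightarrow> complex)" where
  "wco_op m \<beta> f = (\<lambda>z. m z * f (\<beta> * z))"

definition eig_kernel :: "((complex \<Rightarrow> complex) \<Rightarrow> (complex \<Rightarrow> complex)) \<Rightarrow> complex \<Rightarrow> (complex \<Rightarrow> complex) set" where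
  "eig_kernel T lam = {f. f holomorphic_on ball 0 1 \<and> (\<forall>z\<in>ball 0 1. T f z = lam * f z)}"

definition point_spectrum :: "((complex \<Rightarrow> complex) \<Rightarrow> (complex \<Rightarrow> complex)) \<Rightarrow> complex set" where
  "point_spectrum T = {lam. \<exists>f\<in>eig_kernel T lam. \<exists>z\<in>ball 0 1. f z \<noteq> 0}"

end

theory Submission
  imports Defs
begin

(* If g is holomorphic on the disc and solves the cohomological equation
   g z - g (beta z) = m1 z - m1 0, then f \<mapsto> f * exp (- g) conjugates T to m 0 times the
   rotation f \<mapsto> f (beta z), whose eigenfunctions are the monomials z^k with the pairwise distinct
   eigenvalues beta^k.  Comparing Taylor coefficients, the equation is solvable exactly when the
   series with coefficients a n / (1 - beta^n) has radius of convergence at least 1, and g1 is then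
   a solution.  Conversely, a zero z \<noteq> 0 of an eigenfunction propagates along the infinite orbit
   beta^n z and forces f = 0; so a nonzero eigenfunction is z^k h with h zero-free, and a logarithm
   of h solves the cohomological equation. *)

lemma inj_power_if_not_root_of_unity:
  fixes \<beta> :: "'a :: idom"
  assumes "\<beta> \<noteq> 0" and "\<forall>n::nat. n \<ge> 1 \<longrightarrow> \<beta> ^ n \<noteq> 1"
  shows "inj (\<lambda>n::nat. \<beta> ^ n)"
proof -
  have "i = j" if "\<beta> ^ i = \<beta> ^ j" "i \<le> j" for i j :: nat
  proof -
    have "\<beta> ^ i * \<beta> ^ (j - i) = \<beta> ^ j"
      using that(2) by (simp flip: power_add)
    then have "\<beta> ^ i * \<beta> ^ (j - i) = \<beta> ^ i * 1"
      using that(1) by simp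
    then have "\<beta> ^ (j - i) = 1"
      using assms(1) by simp
    then show "i = j"
      using assms(2) that(2) by (metis diff_is_0_eq le_antisym less_one not_less)
  qed
  then show ?thesis
    by (metis injI nle_le)
qed

lemma sums_fps_expansion_on_ball:
  assumes "f holomorphic_on ball 0 r" and "z \<in> ball 0 r"
  shows "(\<lambda>n. fps_nth (fps_expansion f 0) n * z ^ n) sums f z"
  using holomorphic_power_series[OF assms] by (simp add: fps_expansion_def)

lemma power_series_unique_on_ball:
  fixes c d :: "nat \<Rightarrow> complex"
  assumes "0 < r"
    and "\<forall>z\<in>ball 0 r. (\<lambda>n. c n * z ^ n) sums f z"
    and "\<forall>z\<in>ball 0 r. (\<lambda>n. d n * z ^ n) sums f z"
  shows "c = d"
proof -
  have near_0: "\<forall>\<^sub>F z in nhds 0. z \<in> ball (0::complex) r"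
    using assms(1) by (intro eventually_nhds_in_open) auto
  have "f has_fps_expansion Abs_fps c" and "f has_fps_expansion Abs_fps d"
    using assms(2,3) by (auto intro!: has_fps_expansionI eventually_mono[OF near_0])
  then have "Abs_fps c = Abs_fps d"
    by (rule fps_expansion_unique_complex)
  then show ?thesis
    by (simp add: fps_eq_iff fun_eq_iff)
qed

lemma sums_minus_value_at_0:
  fixes c :: "nat \<Rightarrow> complex"
  assumes u: "\<forall>z\<in>ball 0 r. (\<lambda>n. c n * z ^ n) sums u z" and z: "z \<in> ball 0 r"
  shows "(\<lambda>n. (if n = 0 then 0 else c n) * z ^ n) sums (u z - u 0)"
proof -
  have "0 < r"
    using z norm_ge_zero[of z] unfolding mem_ball_0 by linarith
  then have zero: "0 \<in> ball (0::complex) r"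
    by simp
  have "u 0 = c 0"
    using bspec[OF u zero] by simp
  moreover have "(\<lambda>n. (if n = 0 then 0 else c n) * z ^ n) = (\<lambda>n. c n * z ^ n - (if n = 0 then c 0 else 0))"
    by (simp add: fun_eq_iff)
  ultimately show ?thesis
    using sums_diff[OF bspec[OF u z] sums_single[of 0 "\<lambda>_. c 0"]] by simp
qed

lemma rotation_eigenfunction_cases:
  fixes \<beta> \<mu> :: complex
  assumes \<beta>: "norm \<beta> = 1" "inj (\<lambda>n::nat. \<beta> ^ n)"
    and F: "F holomorphic_on ball 0 r"
    and rot: "\<forall>z\<in>ball 0 r. F (\<beta> * z) = \<mu> * F z"
  obtains "\<forall>z\<in>ball 0 r. F z = 0"
    | k c where "\<mu> = \<beta> ^ k" and "\<forall>z\<in>ball 0 r. F z = c * z ^ k"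
proof (cases "0 < r")
  case False
  show ?thesis
  proof (rule that(1))
    show "\<forall>z\<in>ball 0 r. F z = 0"
      using False by (simp add: ball_empty)
  qed
next
  case True
  define q where "q = fps_nth (fps_expansion F 0)"
  have F_sums: "(\<lambda>n. q n * z ^ n) sums F z" if "z \<in> ball 0 r" for z
    unfolding q_def using F that by (rule sums_fps_expansion_on_ball)
  have rot_ball: "\<beta> * z \<in> ball 0 r" if "z \<in> ball 0 r" for z
    using that \<beta>(1) by (simp add: norm_mult)
  have "(\<lambda>n. q n * \<beta> ^ n) = (\<lambda>n. \<mu> * q n)"
  proof (rule power_series_unique_on_ball[OF True])
    show "\<forall>z\<in>ball 0 r. (\<lambda>n. q n * \<beta> ^ n * z ^ n) sums F (\<beta> * z)"
      using F_sums[OF rot_ball] by (simp add: power_mult_distrib mult.assoc)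
    show "\<forall>z\<in>ball 0 r. (\<lambda>n. \<mu> * q n * z ^ n) sums F (\<beta> * z)"
      using F_sums rot by (auto simp: mult.assoc intro: sums_mult)
  qed
  then have q_rot: "q n * \<beta> ^ n = \<mu> * q n" for n
    by metis
  show ?thesis
  proof (cases "\<exists>k. q k \<noteq> 0")
    case True
    then obtain k where k: "q k \<noteq> 0"
      by blast
    then have \<mu>: "\<mu> = \<beta> ^ k"
      using q_rot[of k] by simp
    have "q n = 0" if "n \<noteq> k" for n
      using q_rot[of n] \<beta>(2) that unfolding \<mu> by (auto simp: inj_def)
    then have "(\<lambda>n. q n * z ^ n) = (\<lambda>n. if n = k then q k * z ^ k else 0)" for z
      by auto
    then have "\<forall>z\<in>ball 0 r. F z = q k * z ^ k"
      using F_sums sums_single[of k "\<lambda>_. q k * z ^ k" for z] sums_unique2 by metis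
    with \<mu> show ?thesis
      by (rule that(2))
  next
    case False
    then have "(\<lambda>n. q n * z ^ n) = (\<lambda>_. 0)" for z
      by simp
    then have "\<forall>z\<in>ball 0 r. F z = 0"
      using F_sums sums_zero sums_unique2 by metis
    then show ?thesis
      by (rule that(1))
  qed
qed

lemma holomorphic_vanishing_on_rotation_orbit:
  fixes \<beta> z :: complex
  assumes \<beta>: "norm \<beta> = 1" "inj (\<lambda>n::nat. \<beta> ^ n)"
    and f: "f holomorphic_on ball 0 r"
    and z: "z \<in> ball 0 r" "z \<noteq> 0"
    and orbit: "\<And>n. f (\<beta> ^ n * z) = 0"
    and w: "w \<in> ball 0 r"
  shows "f w = 0"
proof -
  let ?O = "range (\<lambda>n. \<beta> ^ n * z)"
  have "inj (\<lambda>n. \<beta> ^ n * z)"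
    using \<beta>(2) z(2) by (auto simp: inj_def)
  then have "infinite ?O"
    by (rule range_inj_infinite)
  moreover have "?O \<subseteq> sphere 0 (norm z)"
    using \<beta>(1) by (auto simp: norm_mult norm_power)
  ultimately obtain \<xi> where \<xi>: "\<xi> \<in> sphere 0 (norm z)" "\<xi> islimpt ?O"
    using compact_sphere compact_eq_Bolzano_Weierstrass by blast
  have "\<xi> \<in> ball 0 r" and "?O \<subseteq> ball 0 r"
    using z(1) \<xi>(1) \<open>?O \<subseteq> sphere 0 (norm z)\<close> by auto
  then show ?thesis
    using analytic_continuation[OF f _ _ _ _ \<xi>(2) _ w] orbit by auto
qed

lemma holomorphic_on_ball_factor_power:
  fixes f :: "complex \<Rightarrow> complex"
  assumes f: "f holomorphic_on ball 0 r" and w: "w \<in> ball 0 r" "f w \<noteq> 0"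
  obtains k h where "h holomorphic_on ball 0 r" and "h 0 \<noteq> 0"
    and "\<And>z. z \<in> ball 0 r \<Longrightarrow> f z = z ^ k * h z"
proof -
  define q where "q = fps_nth (fps_expansion f 0)"
  have f_sums: "(\<lambda>n. q n * z ^ n) sums f z" if "z \<in> ball 0 r" for z
    unfolding q_def using f that by (rule sums_fps_expansion_on_ball)
  have "\<exists>k. q k \<noteq> 0"
  proof (rule ccontr)
    assume "\<nexists>k. q k \<noteq> 0"
    then have "(\<lambda>n. q n * w ^ n) sums 0"
      by simp
    then show False
      using f_sums[OF w(1)] w(2) sums_unique2 by blast
  qed
  define k where "k = (LEAST k. q k \<noteq> 0)"
  have qk: "q k \<noteq> 0"
    unfolding k_def using \<open>\<exists>k. q k \<noteq> 0\<close> by (rule LeastI_ex)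
  have below_k: "q i = 0" if "i < k" for i
    using that not_less_Least unfolding k_def by blast
  define h where "h z = (\<Sum>j. q (j + k) * z ^ j)" for z
  have h_sums: "(\<lambda>j. q (j + k) * z ^ j) sums h z \<and> f z = z ^ k * h z" if z: "z \<in> ball 0 r" for z
  proof (cases "z = 0")
    case True
    have "f 0 = q 0"
      using f_sums[of 0] z True by simp
    moreover have "q 0 = 0 ^ k * q k"
      using below_k[of 0] by (cases k) auto
    ultimately show ?thesis
      using True powser_sums_zero[of "\<lambda>j. q (j + k)"] by (simp add: h_def)
  next
    case False
    have "(\<lambda>j. q (j + k) * z ^ (j + k)) sums f z"
      using sums_zero_iff_shift[of k "\<lambda>n. q n * z ^ n"] below_k f_sums[OF z] by simp
    then have "(\<lambda>j. z ^ k * (q (j + k) * z ^ j)) sums f z"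
      by (simp add: power_add algebra_simps)
    then have "(\<lambda>j. q (j + k) * z ^ j) sums (f z / z ^ k)"
      by (rule sums_mult_D) (use False in simp)
    then show ?thesis
      using False by (simp add: h_def sums_iff)
  qed
  show ?thesis
  proof
    show "h holomorphic_on ball 0 r"
      by (rule power_series_holomorphic[where a = "\<lambda>j. q (j + k)"]) (use h_sums in simp)
    show "h 0 \<noteq> 0"
      using qk by (simp add: h_def)
  qed (use h_sums in blast)
qed

lemma holomorphic_exp_eq_1_imp_constant:
  fixes E :: "complex \<Rightarrow> complex"
  assumes E: "E holomorphic_on S" and S: "open S" "connected S"
    and exp_E: "\<And>z. z \<in> S \<Longrightarrow> exp (E z) = 1"
  obtains c where "\<And>z. z \<in> S \<Longrightarrow> E z = c"
proof (rule DERIV_zero_connected_constant[OF S(2,1) finite.emptyI])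
  show "continuous_on S E"
    using E by (rule holomorphic_on_imp_continuous_on)
  show "\<forall>x\<in>S - {}. (E has_field_derivative 0) (at x)"
  proof
    fix x assume x: "x \<in> S - {}"
    then obtain E' where E': "(E has_field_derivative E') (at x)"
      using E S(1) by (auto simp: holomorphic_on_open)
    have "((\<lambda>z. exp (E z)) has_field_derivative exp (E x) * E') (at x)"
      using DERIV_chain2[OF DERIV_exp E'] .
    moreover have "((\<lambda>z. exp (E z)) has_field_derivative 0) (at x)"
      by (rule has_field_derivative_transform_within_open[OF DERIV_const[of 1] S(1)])
         (use x exp_E in auto)
    ultimately have "exp (E x) * E' = 0"
      by (rule DERIV_unique)
    then show "(E has_field_derivative 0) (at x)"
      using E' by simp
  qed
qed (rule that)

lemma one_le_conv_radius_iff: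
  "1 \<le> conv_radius c \<longleftrightarrow> limsup (\<lambda>n. ereal (root n (norm (c n)))) \<le> 1"
proof -
  define L where "L = limsup (\<lambda>n. ereal (root n (norm (c n))))"
  have "0 \<le> L"
    unfolding L_def by (rule order.trans[OF _ Limsup_mono[of "\<lambda>_. 0"]])
       (simp_all add: Limsup_const real_root_ge_zero)
  then have "1 \<le> inverse L \<longleftrightarrow> L \<le> 1"
    by (cases L) (auto simp: one_ereal_def one_le_inverse_iff)
  then show ?thesis
    by (simp add: conv_radius_def L_def)
qed

lemma mult_diff_mult_rotate:
  fixes d \<beta> z :: "'a :: comm_ring_1"
  shows "d * z ^ n - d * (\<beta> * z) ^ n = d * (1 - \<beta> ^ n) * z ^ n"
  by (simp add: power_mult_distrib algebra_simps)

lemma rotation_coboundary_conv_radius: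
  fixes \<beta> :: complex and c :: "nat \<Rightarrow> complex"
  assumes \<beta>: "norm \<beta> = 1" "\<forall>n::nat. n \<ge> 1 \<longrightarrow> \<beta> ^ n \<noteq> 1"
    and u: "\<forall>z\<in>ball 0 r. (\<lambda>n. c n * z ^ n) sums u z"
    and g: "g holomorphic_on ball 0 r"
    and cob: "\<forall>z\<in>ball 0 r. g z - g (\<beta> * z) = u z - u 0"
  shows "ereal r \<le> conv_radius (\<lambda>n. c n / (1 - \<beta> ^ n))"
proof (cases "0 < r")
  case False
  then have "ereal r \<le> 0"
    by simp
  then show ?thesis
    using conv_radius_nonneg by (rule order.trans)
next
  case True
  define q where "q = fps_nth (fps_expansion g 0)"
  have g_sums: "(\<lambda>n. q n * z ^ n) sums g z" if "z \<in> ball 0 r" for z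
    unfolding q_def using g that by (rule sums_fps_expansion_on_ball)
  have "(\<lambda>n. q n * (1 - \<beta> ^ n) * z ^ n) sums (u z - u 0)" if z: "z \<in> ball 0 r" for z
  proof -
    have \<beta>z: "\<beta> * z \<in> ball 0 r"
      using z \<beta>(1) by (simp add: norm_mult)
    have cob_z: "g z - g (\<beta> * z) = u z - u 0"
      using cob z by blast
    from sums_diff[OF g_sums[OF z] g_sums[OF \<beta>z]] show ?thesis
      unfolding cob_z by (simp only: mult_diff_mult_rotate)
  qed
  then have coeffs: "(\<lambda>n. q n * (1 - \<beta> ^ n)) = (\<lambda>n. if n = 0 then 0 else c n)"
    using sums_minus_value_at_0[OF u] by (intro power_series_unique_on_ball[OF True]) auto
  have "q n = c n / (1 - \<beta> ^ n)" if "n \<ge> 1" for n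
  proof -
    have "q n * (1 - \<beta> ^ n) = c n"
      using fun_cong[OF coeffs, of n] that by (simp only: split: if_splits) simp
    moreover have "1 - \<beta> ^ n \<noteq> 0"
      using \<beta>(2) that by simp
    ultimately show ?thesis
      by (simp add: field_simps)
  qed
  then have "conv_radius (\<lambda>n. c n / (1 - \<beta> ^ n)) = conv_radius q"
    by (intro conv_radius_cong' eventually_sequentiallyI[of 1]) simp
  also have "ereal r \<le> conv_radius q"
    using conv_radius_fps_expansion[of g 0 "ereal r"] g by (simp add: q_def fps_conv_radius_def)
  finally show ?thesis .
qed

lemma rotation_coboundary_solution:
  fixes \<beta> :: complex and c :: "nat \<Rightarrow> complex"
  assumes \<beta>: "norm \<beta> = 1" "\<forall>n::nat. n \<ge> 1 \<longrightarrow> \<beta> ^ n \<noteq> 1"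
    and u: "\<forall>z\<in>ball 0 r. (\<lambda>n. c n * z ^ n) sums u z"
    and radius: "ereal r \<le> conv_radius (\<lambda>n. c n / (1 - \<beta> ^ n))"
  defines "g \<equiv> \<lambda>z. \<Sum>k. c (Suc k) / (1 - \<beta> ^ Suc k) * z ^ Suc k"
  shows "g holomorphic_on ball 0 r" and "\<forall>z\<in>ball 0 r. g z - g (\<beta> * z) = u z - u 0"
proof -
  \<comment> \<open>The constant term of the series below is c 0 / 0 = 0, so it agrees with the one defining g.\<close>
  have g_sums: "(\<lambda>n. c n / (1 - \<beta> ^ n) * z ^ n) sums g z" if "z \<in> ball 0 r" for z
  proof -
    have "summable (\<lambda>n. c n / (1 - \<beta> ^ n) * z ^ n)"
      by (rule summable_in_conv_radius, rule order.strict_trans2[OF _ radius]) (use that in simp)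
    then have "(\<lambda>n. c (Suc n) / (1 - \<beta> ^ Suc n) * z ^ Suc n) sums g z"
      unfolding g_def by (subst (asm) summable_Suc_iff[symmetric]) (rule summable_sums)
    then show ?thesis
      using sums_Suc_iff[where f = "\<lambda>n. c n / (1 - \<beta> ^ n) * z ^ n"] by simp
  qed
  show "g holomorphic_on ball 0 r"
    by (rule power_series_holomorphic[where a = "\<lambda>n. c n / (1 - \<beta> ^ n)"]) (use g_sums in simp)
  show "\<forall>z\<in>ball 0 r. g z - g (\<beta> * z) = u z - u 0"
  proof
    fix z :: complex assume z: "z \<in> ball 0 r"
    then have \<beta>z: "\<beta> * z \<in> ball 0 r"
      using \<beta>(1) by (simp add: norm_mult)
    have coeff: "c n / (1 - \<beta> ^ n) * (1 - \<beta> ^ n) = (if n = 0 then 0 else c n)" for n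
      using \<beta>(2) by auto
    from sums_diff[OF g_sums[OF z] g_sums[OF \<beta>z]]
    have "(\<lambda>n. (if n = 0 then 0 else c n) * z ^ n) sums (g z - g (\<beta> * z))"
      by (simp only: mult_diff_mult_rotate coeff)
    then show "g z - g (\<beta> * z) = u z - u 0"
      using sums_minus_value_at_0[OF u z] sums_unique2 by blast
  qed
qed

locale rotation_weighted_composition =
  fixes \<beta> :: complex and m m1 :: "complex \<Rightarrow> complex"
  assumes norm_beta: "norm \<beta> = 1"
    and inj_beta_power: "inj (\<lambda>n::nat. \<beta> ^ n)"
    and m_holomorphic: "m holomorphic_on ball 0 1"
    and m1_holomorphic: "m1 holomorphic_on ball 0 1"
    and m_eq_exp: "\<forall>z\<in>ball 0 1. m z = exp (m1 z)"
begin

abbreviation T :: "(complex \<Rightarrow> complex) \<Rightarrow> complex \<Rightarrow> complex" where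
  "T \<equiv> wco_op m \<beta>"

lemma beta_times_in_ball: "z \<in> ball 0 1 \<Longrightarrow> \<beta> * z \<in> ball 0 1"
  using norm_beta by (simp add: norm_mult)

lemma holomorphic_on_rotate:
  assumes "g holomorphic_on ball 0 1"
  shows "(\<lambda>z. g (\<beta> * z)) holomorphic_on ball 0 1"
proof -
  have "(\<lambda>z. \<beta> * z) ` ball 0 1 \<subseteq> ball 0 1"
    using beta_times_in_ball by blast
  then show ?thesis
    using holomorphic_on_compose_gen[of "\<lambda>z. \<beta> * z" "ball 0 1" g "ball 0 1"] assms
    by (simp add: o_def holomorphic_intros)
qed

lemma m_nonzero: "z \<in> ball 0 1 \<Longrightarrow> m z \<noteq> 0"
  using m_eq_exp by simp

lemma eig_kernel_iff:
  "f \<in> eig_kernel T lam \<longleftrightarrow>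
     f holomorphic_on ball 0 1 \<and> (\<forall>z\<in>ball 0 1. m z * f (\<beta> * z) = lam * f z)"
  by (simp add: eig_kernel_def wco_op_def)

lemma m_mult_exp_rotate_if_coboundary:
  assumes cob: "\<forall>z\<in>ball 0 1. g z - g (\<beta> * z) = m1 z - m1 0" and z: "z \<in> ball 0 1"
  shows "m z * exp (g (\<beta> * z)) = m 0 * exp (g z)"
proof -
  have "m z * exp (g (\<beta> * z)) = exp (m1 z + g (\<beta> * z))"
    using m_eq_exp z by (simp add: exp_add)
  also have "m1 z + g (\<beta> * z) = m1 0 + g z"
    using cob z by (auto simp: algebra_simps)
  also have "exp (m1 0 + g z) = m 0 * exp (g z)"
    using m_eq_exp by (simp add: exp_add)
  finally show ?thesis .
qed

lemma monomial_exp_in_eig_kernel: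
  assumes g: "g holomorphic_on ball 0 1"
    and cob: "\<forall>z\<in>ball 0 1. g z - g (\<beta> * z) = m1 z - m1 0"
  shows "(\<lambda>z. z ^ n * exp (g z)) \<in> eig_kernel T (m 0 * \<beta> ^ n)"
  unfolding eig_kernel_iff
proof (intro conjI ballI)
  show "(\<lambda>z. z ^ n * exp (g z)) holomorphic_on ball 0 1"
    using g by (intro holomorphic_intros)
  fix z :: complex assume z: "z \<in> ball 0 1"
  have "m z * ((\<beta> * z) ^ n * exp (g (\<beta> * z))) = \<beta> ^ n * z ^ n * (m z * exp (g (\<beta> * z)))"
    by (simp add: power_mult_distrib)
  also have "\<dots> = m 0 * \<beta> ^ n * (z ^ n * exp (g z))"
    using m_mult_exp_rotate_if_coboundary[OF cob z] by simp
  finally show "m z * ((\<beta> * z) ^ n * exp (g (\<beta> * z))) = m 0 * \<beta> ^ n * (z ^ n * exp (g z))" .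
qed

lemma eig_kernel_cases:
  assumes g: "g holomorphic_on ball 0 1"
    and cob: "\<forall>z\<in>ball 0 1. g z - g (\<beta> * z) = m1 z - m1 0"
    and f: "f \<in> eig_kernel T lam"
  obtains "\<forall>z\<in>ball 0 1. f z = 0"
    | k c where "lam = m 0 * \<beta> ^ k" and "\<forall>z\<in>ball 0 1. f z = c * (z ^ k * exp (g z))"
proof -
  define F where "F z = f z * exp (- g z)" for z
  have "F holomorphic_on ball 0 1"
    using f g unfolding F_def eig_kernel_iff by (auto intro!: holomorphic_intros)
  moreover have "\<forall>z\<in>ball 0 1. F (\<beta> * z) = lam / m 0 * F z"
  proof
    fix z :: complex assume z: "z \<in> ball 0 1"
    have "F (\<beta> * z) * m 0 * exp (g z) = m z * f (\<beta> * z)"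
      using m_mult_exp_rotate_if_coboundary[OF cob z] by (simp add: F_def exp_minus field_simps)
    also have "\<dots> = lam * f z"
      using f z by (simp add: eig_kernel_iff)
    finally show "F (\<beta> * z) = lam / m 0 * F z"
      using m_nonzero[of 0] by (simp add: F_def exp_minus field_simps)
  qed
  ultimately show ?thesis
  proof (rule rotation_eigenfunction_cases[OF norm_beta inj_beta_power])
    assume "\<forall>z\<in>ball 0 1. F z = 0"
    then show ?thesis
      using that(1) by (simp add: F_def)
  next
    fix k c assume "lam / m 0 = \<beta> ^ k" and "\<forall>z\<in>ball 0 1. F z = c * z ^ k"
    then show ?thesis
      using that(2)[of k c] m_nonzero[of 0] by (simp add: F_def exp_minus field_simps)
  qed
qed

lemma point_spectrum_if_coboundary:
  assumes g: "g holomorphic_on ball 0 1"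
    and cob: "\<forall>z\<in>ball 0 1. g z - g (\<beta> * z) = m1 z - m1 0"
  shows "point_spectrum T = {m 0 * \<beta> ^ n | n. True}"
proof safe
  fix lam assume "lam \<in> point_spectrum T"
  then obtain f w where f: "f \<in> eig_kernel T lam" and w: "w \<in> ball 0 1" "f w \<noteq> 0"
    by (auto simp: point_spectrum_def)
  from g cob f show "\<exists>n. lam = m 0 * \<beta> ^ n \<and> True"
    by (rule eig_kernel_cases) (use w in auto)
next
  fix n :: nat
  show "m 0 * \<beta> ^ n \<in> point_spectrum T"
    unfolding point_spectrum_def mem_Collect_eq
  proof (rule bexI[OF _ monomial_exp_in_eig_kernel[OF g cob]])
    show "\<exists>z\<in>ball 0 1. z ^ n * exp (g z) \<noteq> 0"
      by (rule bexI[of _ "1/2"]) simp_all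
  qed
qed

lemma eig_kernel_spanned_if_coboundary:
  assumes g: "g holomorphic_on ball 0 1"
    and cob: "\<forall>z\<in>ball 0 1. g z - g (\<beta> * z) = m1 z - m1 0"
    and f: "f \<in> eig_kernel T (m 0 * \<beta> ^ n)"
  shows "\<exists>c. \<forall>z\<in>ball 0 1. f z = c * (z ^ n * exp (g z))"
  using g cob f
proof (rule eig_kernel_cases)
  assume "\<forall>z\<in>ball 0 1. f z = 0"
  then show ?thesis
    by (intro exI[of _ 0]) simp
next
  fix k c assume "m 0 * \<beta> ^ n = m 0 * \<beta> ^ k" and "\<forall>z\<in>ball 0 1. f z = c * (z ^ k * exp (g z))"
  moreover from this(1) have "n = k"
    using m_nonzero[of 0] inj_beta_power by (simp add: inj_def)
  ultimately show ?thesis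
    by blast
qed

lemma eigenfunction_vanishes_on_orbit:
  assumes f: "f \<in> eig_kernel T lam" and z: "z \<in> ball 0 1" "f z = 0"
  shows "f (\<beta> ^ n * z) = 0"
proof (induction n)
  case (Suc n)
  have "\<beta> ^ n * z \<in> ball 0 1"
    using z(1) norm_beta by (simp add: norm_mult norm_power)
  then have "m (\<beta> ^ n * z) * f (\<beta> * (\<beta> ^ n * z)) = 0"
    using f Suc.IH by (simp add: eig_kernel_iff)
  then show ?case
    using m_nonzero \<open>\<beta> ^ n * z \<in> ball 0 1\<close> by (simp add: mult.assoc)
qed (use z in simp)

lemma eigenfunction_nonzero_off_0:
  assumes f: "f \<in> eig_kernel T lam" and w: "w \<in> ball 0 1" "f w \<noteq> 0"
    and z: "z \<in> ball 0 1" "z \<noteq> 0"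
  shows "f z \<noteq> 0"
proof
  assume "f z = 0"
  then have "f w = 0"
    using holomorphic_vanishing_on_rotation_orbit[OF norm_beta inj_beta_power _ z _ w(1)]
      eigenfunction_vanishes_on_orbit[OF f z(1)] f by (simp add: eig_kernel_iff)
  with w(2) show False ..
qed

lemma coboundary_if_zero_free_solution:
  assumes h: "h holomorphic_on ball 0 1" "\<forall>z\<in>ball 0 1. h z \<noteq> 0"
    and eq: "\<forall>z\<in>ball 0 1. m z * h (\<beta> * z) = m 0 * h z"
  obtains g where "g holomorphic_on ball 0 1" and "\<forall>z\<in>ball 0 1. g z - g (\<beta> * z) = m1 z - m1 0"
proof -
  obtain g where g: "g holomorphic_on ball 0 1" and exp_g: "\<And>z. z \<in> ball 0 1 \<Longrightarrow> exp (g z) = h z"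
    using holomorphic_logarithm_exists[of "ball 0 1" h 0] h by auto
  define E where "E z = g z - g (\<beta> * z) - (m1 z - m1 0)" for z
  have E_hol: "E holomorphic_on ball 0 1"
    unfolding E_def using g m1_holomorphic holomorphic_on_rotate[OF g]
    by (intro holomorphic_intros) auto
  have exp_E: "exp (E z) = 1" if z: "z \<in> ball 0 1" for z
  proof -
    have "exp (E z) = h z * m 0 / (h (\<beta> * z) * m z)"
      using z beta_times_in_ball[OF z] m_eq_exp by (simp add: E_def exp_diff exp_g)
    also have "h (\<beta> * z) * m z = h z * m 0"
      using eq z by (metis mult.commute)
    also have "h z * m 0 / (h z * m 0) = 1"
      using h(2) z m_nonzero[of 0] by simp
    finally show ?thesis .
  qed
  obtain C where "\<And>z. z \<in> ball 0 1 \<Longrightarrow> E z = C"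
    using holomorphic_exp_eq_1_imp_constant[OF E_hol open_ball connected_ball exp_E] by blast
  moreover have "E 0 = 0"
    by (simp add: E_def)
  ultimately have "\<forall>z\<in>ball 0 1. E z = 0"
    by (metis centre_in_ball zero_less_one)
  with g show ?thesis
    by (intro that) (auto simp: E_def)
qed

lemma eigenfunction_cofactor_eq:
  assumes f: "f \<in> eig_kernel T lam"
    and h: "h holomorphic_on ball 0 1" "h 0 \<noteq> 0"
    and f_eq: "\<And>z. z \<in> ball 0 1 \<Longrightarrow> f z = z ^ k * h z"
  shows "\<forall>z\<in>ball 0 1. m z * h (\<beta> * z) = m 0 * h z"
proof -
  define D where "D z = \<beta> ^ k * m z * h (\<beta> * z) - lam * h z" for z
  have D_zero: "D z = 0" if z: "z \<in> ball 0 1" for z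
  proof (rule analytic_continuation[of D "ball 0 1" "ball 0 1 - {0}" 0])
    show "D holomorphic_on ball 0 1"
      unfolding D_def using m_holomorphic h(1) holomorphic_on_rotate[OF h(1)]
      by (intro holomorphic_intros) auto
    have "0 islimpt ball (0::complex) 1"
      by (simp add: islimpt_ball)
    then show "0 islimpt ball (0::complex) 1 - {0}"
      using islimpt_punctured by blast
    fix y :: complex assume y: "y \<in> ball 0 1 - {0}"
    then have "m y * f (\<beta> * y) = lam * f y"
      using f by (simp add: eig_kernel_iff)
    then have "m y * ((\<beta> * y) ^ k * h (\<beta> * y)) = lam * (y ^ k * h y)"
      using y f_eq beta_times_in_ball by simp
    then have "y ^ k * D y = 0"
      by (simp add: D_def power_mult_distrib algebra_simps)
    with y show "D y = 0"
      by simp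
  qed (use z in auto)
  have lam: "lam = \<beta> ^ k * m 0"
    using D_zero[of 0] h(2) by (simp add: D_def)
  show ?thesis
  proof
    fix z :: complex assume "z \<in> ball 0 1"
    then have "D z = 0"
      by (rule D_zero)
    then have "\<beta> ^ k * (m z * h (\<beta> * z) - m 0 * h z) = 0"
      by (simp add: D_def lam algebra_simps)
    then show "m z * h (\<beta> * z) = m 0 * h z"
      using norm_beta by auto
  qed
qed

lemma coboundary_if_eigenfunction:
  assumes f: "f \<in> eig_kernel T lam" and w: "w \<in> ball 0 1" "f w \<noteq> 0"
  obtains g where "g holomorphic_on ball 0 1" and "\<forall>z\<in>ball 0 1. g z - g (\<beta> * z) = m1 z - m1 0"
proof -
  have f_hol: "f holomorphic_on ball 0 1"
    using f by (simp add: eig_kernel_iff)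
  obtain k h where h: "h holomorphic_on ball 0 1" "h 0 \<noteq> 0"
    and f_eq: "\<And>z. z \<in> ball 0 1 \<Longrightarrow> f z = z ^ k * h z"
    using holomorphic_on_ball_factor_power[OF f_hol w] by blast
  have "\<forall>z\<in>ball 0 1. h z \<noteq> 0"
    using h(2) f_eq eigenfunction_nonzero_off_0[OF f w] by (metis mult_zero_right)
  moreover have "\<forall>z\<in>ball 0 1. m z * h (\<beta> * z) = m 0 * h z"
    using f h f_eq by (rule eigenfunction_cofactor_eq)
  ultimately show ?thesis
    using coboundary_if_zero_free_solution[OF h(1)] that by blast
qed

end

theorem theorem3p7:
  fixes \<beta> :: complex and m m1 :: "complex \<Rightarrow> complex" and a :: "nat \<Rightarrow> complex"
  assumes beta_norm: "norm \<beta> = 1"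
    and beta_pow: "\<forall>n::nat. n \<ge> 1 \<longrightarrow> \<beta> ^ n \<noteq> 1"
    and m_hol: "m holomorphic_on ball 0 1"
    and m_nz: "\<forall>z\<in>ball 0 1. m z \<noteq> 0"
    and m1_hol: "m1 holomorphic_on ball 0 1"
    and m_exp: "\<forall>z\<in>ball 0 1. m z = exp (m1 z)"
    and m1_series: "\<forall>z\<in>ball 0 1. (\<lambda>n. a n * z ^ n) sums m1 z"
  shows
    "(limsup (\<lambda>n. ereal (root n (norm (a n) / norm (1 - \<beta> ^ n)))) \<le> 1 \<longrightarrow>
        point_spectrum (wco_op m \<beta>) = {m 0 * \<beta> ^ n | n. True} \<and>
        (\<forall>n::nat.
           let g1 = (\<lambda>z. \<Sum>k. a (Suc k) / (1 - \<beta> ^ Suc k) * z ^ Suc k);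
               fn = (\<lambda>z. z ^ n * exp (g1 z))
           in fn \<in> eig_kernel (wco_op m \<beta>) (m 0 * \<beta> ^ n) \<and>
              (\<exists>z\<in>ball 0 1. fn z \<noteq> 0) \<and>
              (\<forall>f\<in>eig_kernel (wco_op m \<beta>) (m 0 * \<beta> ^ n).
                  \<exists>c. \<forall>z\<in>ball 0 1. f z = c * fn z)))
     \<and>
     (limsup (\<lambda>n. ereal (root n (norm (a n) / norm (1 - \<beta> ^ n)))) > 1 \<longrightarrow>
        point_spectrum (wco_op m \<beta>) = {})"
proof -
  interpret rotation_weighted_composition \<beta> m m1
  proof
    show "inj (\<lambda>n::nat. \<beta> ^ n)"
      using beta_norm beta_pow by (intro inj_power_if_not_root_of_unity) auto
  qed (use beta_norm m_hol m1_hol m_exp in auto)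
  let ?c = "\<lambda>n. a n / (1 - \<beta> ^ n)"
  show ?thesis (is "(?small \<longrightarrow> ?spectrum \<and> ?kernels) \<and> (?large \<longrightarrow> ?no_spectrum)")
  proof (intro conjI impI)
    assume ?small
    then have "ereal 1 \<le> conv_radius ?c"
      using one_le_conv_radius_iff[of ?c] by (simp add: norm_divide one_ereal_def)
    note g1 = rotation_coboundary_solution[OF beta_norm beta_pow m1_series this]
    show ?spectrum
      by (rule point_spectrum_if_coboundary[OF g1])
    show ?kernels
      unfolding Let_def
      using monomial_exp_in_eig_kernel[OF g1] eig_kernel_spanned_if_coboundary[OF g1]
      by (auto intro!: bexI[of _ "1/2"])
  next
    assume ?large
    then have radius: "\<not> ereal 1 \<le> conv_radius ?c"
      using one_le_conv_radius_iff[of ?c] by (simp add: norm_divide one_ereal_def not_le)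
    show ?no_spectrum
    proof (rule ccontr)
      assume "point_spectrum (wco_op m \<beta>) \<noteq> {}"
      then obtain lam f w where "f \<in> eig_kernel T lam" "w \<in> ball 0 1" "f w \<noteq> 0"
        by (auto simp: point_spectrum_def)
      then obtain g where "g holomorphic_on ball 0 1" "\<forall>z\<in>ball 0 1. g z - g (\<beta> * z) = m1 z - m1 0"
        by (rule coboundary_if_eigenfunction)
      then have "ereal 1 \<le> conv_radius ?c"
        by (rule rotation_coboundary_conv_radius[OF beta_norm beta_pow m1_series])
      with radius show False ..
    qed
  qed
qed

end
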